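(* Let $q$ be a power of a prime $p$ and $n\ge 0$ an integer, and assume $F_n(1,x)$ is a permutation polynomial of $\mathbb{F}_q$. If $p=2$, then $3\mid n$. If $p$ is odd, then $n\not\equiv 1,2\pmod 6$.
   Context: For an integer $n\ge 1$, the $n$-th reversed Dickson polynomial of the third kind is $F_n(a,x)=\sum_{i=0}^{\lfloor n/2\rfloor}\frac{n-2i}{n-i}\binom{n-i}{i}(-x)^i a^{n-2i}$, where each coefficient $\frac{n-2i}{n-i}\binom{n-i}{i}$ is an integer (read in $\mathbb{F}_q$), and $F_0(a,x)=0$. A polynomial $f\in\mathbb{F}_q[x]$ is a permutation polynomial of $\mathbb{F}_q$ if $c\mapsto f(c)$ is a bijection of $\mathbb{F}_q$. *)

theory Defs
  imports "HOL-Computational_Algebra.Primes"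
begin

text \<open>Integer coefficient ((n-2i)/(n-i)) * binom(n-i, i) of the reversed Dickson
polynomial of the third kind (exact division for 0 <= i <= n div 2, n >= 1).\<close>
definition rdickson3_coeff :: "nat \<Rightarrow> nat \<Rightarrow> nat" where
  "rdickson3_coeff n i = ((n - 2 * i) * ((n - i) choose i)) div (n - i)"

definition rdickson3 :: "nat \<Rightarrow> 'a::field \<Rightarrow> 'a \<Rightarrow> 'a" where
  "rdickson3 n a x =
     (if n = 0 then 0
      else (\<Sum>i\<le>n div 2. of_nat (rdickson3_coeff n i) * (- x) ^ i * a ^ (n - 2 * i)))"

end

theory Submission
  imports Defs
begin

text \<open>For n \<ge> 1 one has F_n(1,x) = f_{n-1}(-x), where f_m(x) = \<Sum>_i C(m-i,i) x^i are the
Fibonacci polynomials, f_{m+2} = f_{m+1} + x f_m. Hence F_n(1,0) = 1, while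
F_n(1,1) = f_{n-1}(-1) runs through the 6-periodic pattern 1, 1, 0, -1, -1, 0. So
F_n(1,1) = F_n(1,0) when n \<equiv> 1, 2 (mod 6), and in characteristic 2, where -1 = 1,
also when n \<equiv> 4, 5 (mod 6); in these cases F_n(1,x) is not injective.\<close>

lemma rdickson3_coeff_eq:
  assumes "1 \<le> n" "i \<le> n div 2"
  shows "rdickson3_coeff n i = (n - 1 - i) choose i"
proof -
  have "(n - 2 * i) * ((n - i) choose i) = (n - i) * ((n - i - 1) choose i)"
    using binomial_absorb_comp[of "n - i" i] by (simp add: diff_diff_add mult_2)
  moreover have "0 < n - i" using assms by auto
  ultimately show ?thesis unfolding rdickson3_coeff_def by simp
qed

definition fib_poly :: "'a::comm_ring_1 \<Rightarrow> nat \<Rightarrow> 'a" where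
  "fib_poly x m = (\<Sum>i\<le>m. of_nat ((m - i) choose i) * x ^ i)"

lemma fib_poly_eq_sum_atMost:
  assumes "m div 2 \<le> N"
  shows "fib_poly x m = (\<Sum>i\<le>N. of_nat ((m - i) choose i) * x ^ i)"
proof -
  have vanish: "of_nat ((m - i) choose i) * x ^ i = 0" if "m div 2 < i" for i
    using that by (simp add: binomial_eq_0)
  have "fib_poly x m = (\<Sum>i\<le>m div 2. of_nat ((m - i) choose i) * x ^ i)"
    unfolding fib_poly_def by (rule sum.mono_neutral_right) (auto intro: vanish)
  also have "\<dots> = (\<Sum>i\<le>N. of_nat ((m - i) choose i) * x ^ i)"
    by (rule sum.mono_neutral_left) (use assms in \<open>auto intro: vanish\<close>)
  finally show ?thesis .
qed

lemma fib_poly_0 [simp]: "fib_poly x 0 = 1"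
  and fib_poly_Suc_0 [simp]: "fib_poly x (Suc 0) = 1"
  by (simp_all add: fib_poly_def)

lemma fib_poly_zero [simp]: "fib_poly 0 m = 1"
  unfolding fib_poly_def by (simp add: power_0_left atMost_atLeast0 sum.atLeast_Suc_atMost)

lemma binomial_diagonal_Suc_Suc:
  "(m + 2 - i) choose i = ((m + 1 - i) choose i) + (if i = 0 then 0 else (m - (i - 1)) choose (i - 1))"
proof (cases i)
  case (Suc j)
  then show ?thesis
    by (cases "j \<le> m") (auto simp: Suc_diff_le)
qed simp

lemma fib_poly_Suc_Suc: "fib_poly x (m + 2) = fib_poly x (m + 1) + x * fib_poly x m"
proof -
  let ?shifted = "\<lambda>i. (if i = 0 then 0 else of_nat ((m - (i - 1)) choose (i - 1))) * x ^ i"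
  have "of_nat ((m + 2 - i) choose i) * x ^ i = of_nat ((m + 1 - i) choose i) * x ^ i + ?shifted i"
    for i by (subst binomial_diagonal_Suc_Suc) (simp add: distrib_right)
  then have "fib_poly x (m + 2)
      = (\<Sum>i\<le>m + 2. of_nat ((m + 1 - i) choose i) * x ^ i) + (\<Sum>i\<le>m + 2. ?shifted i)"
    by (simp add: fib_poly_def sum.distrib)
  also have "(\<Sum>i\<le>m + 2. of_nat ((m + 1 - i) choose i) * x ^ i) = fib_poly x (m + 1)"
    by (rule fib_poly_eq_sum_atMost[symmetric]) simp
  also have "(\<Sum>i\<le>m + 2. ?shifted i) = (\<Sum>j\<le>m + 1. of_nat ((m - j) choose j) * x ^ Suc j)"
    using sum.atMost_Suc_shift[of ?shifted "m + 1"] by (simp del: sum.atMost_Suc)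
  also have "\<dots> = x * fib_poly x m"
    by (simp only: fib_poly_eq_sum_atMost[of m "m + 1"] sum_distrib_left power_Suc ac_simps)
  finally show ?thesis .
qed

lemma fib_poly_minus_one_add_3: "fib_poly (-1 :: 'a::comm_ring_1) (m + 3) = - fib_poly (-1) m"
  using fib_poly_Suc_Suc[of "-1::'a" "m + 1"] fib_poly_Suc_Suc[of "-1::'a" m]
  by (simp add: numeral_3_eq_3)

lemma fib_poly_minus_one_mod_6: "fib_poly (-1 :: 'a::comm_ring_1) m = fib_poly (-1) (m mod 6)"
proof (induction m rule: less_induct)
  case (less m)
  show ?case
  proof (cases "m < 6")
    case False
    then obtain k where "m = k + 6"
      by (metis add.commute le_Suc_ex not_less)
    then show ?thesis
      using less[of k] fib_poly_minus_one_add_3[of k, where 'a='a]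
        fib_poly_minus_one_add_3[of "k + 3", where 'a='a]
      by (simp add: add.assoc)
  qed simp
qed

lemma fib_poly_minus_one_3: "fib_poly (-1 :: 'a::comm_ring_1) 3 = -1"
  and fib_poly_minus_one_4: "fib_poly (-1 :: 'a::comm_ring_1) 4 = -1"
  using fib_poly_minus_one_add_3[of 0, where 'a='a] fib_poly_minus_one_add_3[of "Suc 0", where 'a='a]
  by simp_all

lemma not_dvd_3_mod_6:
  fixes n :: nat
  assumes "\<not> 3 dvd n"
  shows "n mod 6 \<in> {1, 2, 4, 5}"
proof -
  define k where "k = n mod 6"
  have "k < 6" "\<not> 3 dvd k"
    using assms by (simp_all add: k_def dvd_mod_iff)
  moreover have "k = 0 \<or> k = 1 \<or> k = 2 \<or> k = 3 \<or> k = 4 \<or> k = 5"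
    using \<open>k < 6\<close> by linarith
  ultimately show ?thesis
    unfolding k_def[symmetric] by auto
qed

lemma fib_poly_minus_one_pred:
  assumes "n mod 6 \<in> {1, 2, 4, 5}"
  shows "fib_poly (-1 :: 'a::comm_ring_1) (n - 1) = (if n mod 6 \<in> {1, 2} then 1 else -1)"
proof -
  have "(n - 1) mod 6 = n mod 6 - 1"
    using assms by (cases n) (auto simp: mod_Suc)
  then have "fib_poly (-1 :: 'a) (n - 1) = fib_poly (-1) (n mod 6 - 1)"
    using fib_poly_minus_one_mod_6[of "n - 1", where 'a='a] by simp
  then show ?thesis
    using assms by (auto simp: fib_poly_minus_one_3 fib_poly_minus_one_4)
qed

lemma rdickson3_one_eq_fib_poly:
  assumes "1 \<le> n"
  shows "rdickson3 n 1 x = fib_poly (- x) (n - 1)"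
proof -
  have "rdickson3 n 1 x = (\<Sum>i\<le>n div 2. of_nat ((n - 1 - i) choose i) * (- x) ^ i)"
    unfolding rdickson3_def using assms by (auto intro!: sum.cong simp: rdickson3_coeff_eq)
  also have "\<dots> = fib_poly (- x) (n - 1)"
    by (rule fib_poly_eq_sum_atMost[symmetric]) auto
  finally show ?thesis .
qed

lemma rdickson3_one_not_inj:
  assumes "1 \<le> n" and "fib_poly (-1 :: 'a::field) (n - 1) = 1"
  shows "\<not> inj (\<lambda>c::'a. rdickson3 n 1 c)"
proof
  assume "inj (\<lambda>c::'a. rdickson3 n 1 c)"
  moreover have "rdickson3 n 1 (1::'a) = rdickson3 n 1 0"
    using assms by (simp only: rdickson3_one_eq_fib_poly minus_zero fib_poly_zero)
  ultimately show False
    by (metis injD zero_neq_one)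
qed

theorem theorem3p1:
  fixes p :: nat and n :: nat
  assumes "prime p"
    and "CHAR('a::{field,finite}) = p"
    and "bij (\<lambda>c::'a. rdickson3 n 1 c)"
  shows "(p = 2 \<longrightarrow> 3 dvd n) \<and> (odd p \<longrightarrow> n mod 6 \<noteq> 1 \<and> n mod 6 \<noteq> 2)"
proof -
  have value_ne_1: "fib_poly (-1::'a) (n - 1) \<noteq> 1" if "n mod 6 \<in> {1, 2, 4, 5}"
  proof -
    from that have "1 \<le> n"
      by (cases n) auto
    with rdickson3_one_not_inj bij_is_inj[OF assms(3)] show ?thesis
      by blast
  qed
  have not_1_2: "n mod 6 \<noteq> 1 \<and> n mod 6 \<noteq> 2"
    using value_ne_1 fib_poly_minus_one_pred[of n, where 'a='a] by auto
  have "3 dvd n" if "p = 2"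
  proof (rule ccontr)
    assume "\<not> 3 dvd n"
    then have residue: "n mod 6 \<in> {1, 2, 4, 5}"
      by (rule not_dvd_3_mod_6)
    have "(-1::'a) = 1"
      using assms(2) that of_nat_CHAR[where 'a='a] by (simp add: minus_equation_iff one_add_one)
    then show False
      using value_ne_1[OF residue] fib_poly_minus_one_pred[OF residue, where 'a='a]
      by (simp split: if_splits)
  qed
  with not_1_2 show ?thesis
    by blast
qed

end
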